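(* Let $K\subseteq\mathbb{R}^d$ be closed and convex with non-empty interior and let $\alpha\in\mathbb{R}^d$. The function $g_{K,\alpha}:\mathbb{R}^d\to[0,\infty)$, $g_{K,\alpha}(x):=\exp(-\alpha^\top x)\mathbf{1}_{\{x\in K\}}$, is integrable if and only if $K$ is line-free and $\alpha\in\operatorname{Int}(\operatorname{rec}(K)^* )$. Consequently, the class $\mathcal{F}^1$ of log-1-affine densities in $\mathcal{F}_d$ is \[ \mathcal{F}^1=\bigl\{c_{K,\alpha}^{-1}g_{K,\alpha}: K\text{ closed convex with non-empty interior, }K\text{ line-free},\ \alpha\in\operatorname{Int}(\operatorname{rec}(K)^* )\bigr\}, \] where $c_{K,\alpha}:=\int_K\exp(-\alpha^\top x)\,dx$.
   Context: $\mathcal{F}_d$ is the class of upper semi-continuous log-concave densities on $\mathbb{R}^d$; a density $f$ is log-1-affine if $\operatorname{supp} f=\{f\ne0\}$ is closed and $\log f$ is affine on it. $K$ is line-free if it contains no line. $\operatorname{rec}(K):=\{u:K+u\subseteq K\}$ and $C^*:=\{\alpha:\alpha^\top x\ge0\ \forall x\in C\}$. *)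

theory Defs
  imports "HOL-Analysis.Analysis"
begin

definition usc :: "('a::topological_space \<Rightarrow> real) \<Rightarrow> bool" where
  "usc f \<longleftrightarrow> (\<forall>t. open {x. f x < t})"

definition is_density :: "('a::euclidean_space \<Rightarrow> real) \<Rightarrow> bool" where
  "is_density f \<longleftrightarrow> (\<forall>x. 0 \<le> f x) \<and> integrable lborel f \<and> integral\<^sup>L lborel f = 1"

definition log_concave :: "('a::real_vector \<Rightarrow> real) \<Rightarrow> bool" where
  "log_concave f \<longleftrightarrow> (\<forall>x. 0 \<le> f x) \<and>
     (\<forall>x y t. 0 < t \<and> t < 1 \<longrightarrow>
        f x powr (1 - t) * f y powr t \<le> f ((1 - t) *\<^sub>R x + t *\<^sub>R y))"

definition F_d :: "('a::euclidean_space \<Rightarrow> real) set" where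
  "F_d = {f. is_density f \<and> log_concave f \<and> usc f}"

definition supp :: "('a \<Rightarrow> real) \<Rightarrow> 'a set" where
  "supp f = {x. f x \<noteq> 0}"

definition log_1_affine :: "('a::real_inner \<Rightarrow> real) \<Rightarrow> bool" where
  "log_1_affine f \<longleftrightarrow> closed (supp f) \<and>
     (\<exists>a b. \<forall>x\<in>supp f. ln (f x) = a \<bullet> x + b)"

definition line_free :: "'a::real_vector set \<Rightarrow> bool" where
  "line_free K \<longleftrightarrow> \<not> (\<exists>x u. u \<noteq> 0 \<and> (\<forall>t::real. x + t *\<^sub>R u \<in> K))"

definition rec_cone :: "'a::real_vector set \<Rightarrow> 'a set" where
  "rec_cone K = {u. (\<lambda>x. x + u) ` K \<subseteq> K}"

definition dual_cone :: "'a::real_inner set \<Rightarrow> 'a set" where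
  "dual_cone C = {\<alpha>. \<forall>x\<in>C. 0 \<le> \<alpha> \<bullet> x}"

definition g_fun :: "'a::euclidean_space set \<Rightarrow> 'a \<Rightarrow> 'a \<Rightarrow> real" where
  "g_fun K \<alpha> x = exp (- (\<alpha> \<bullet> x)) * indicator K x"

definition c_const :: "'a::euclidean_space set \<Rightarrow> 'a \<Rightarrow> real" where
  "c_const K \<alpha> = integral\<^sup>L lborel (g_fun K \<alpha>)"

end

theory Submission
  imports Defs "HOL-Real_Asymp.Real_Asymp"
begin

text \<open>
  If a direction u \<noteq> 0 of the recession cone has \<alpha> \<bullet> u \<le> 0, then K contains the pairwise
  disjoint balls of radius r centred at x0 + k v (k \<in> \<nat>, v a positive multiple of u of norm 2r),
  and g is bounded below on all of them by one positive constant, so g is not integrable; a line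
  in K gives two opposite such directions.  Otherwise \<alpha> is positive on the non-zero recession
  directions, and by compactness of the unit sphere even \<alpha> \<bullet> u \<ge> e * norm u there, which is
  exactly membership in the interior of the dual cone.  Since a limit of normalised points of K
  escaping to infinity is a recession direction, this yields \<alpha> \<bullet> x \<ge> e/2 * norm x - C on K, so g
  is dominated by the integrable function exp (C - e/2 * norm x).  Finally, a log-1-affine
  log-concave density is exp (a \<bullet> x + b) on its support, which is closed, convex and, carrying
  mass 1, has non-empty interior.
\<close>

lemma rec_cone_iff: "u \<in> rec_cone K \<longleftrightarrow> (\<forall>x\<in>K. x + u \<in> K)"
  by (auto simp: rec_cone_def)

lemma closed_rec_cone:
  fixes K :: "'a::real_normed_vector set"
  assumes "closed K"
  shows "closed (rec_cone K)"
proof -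
  have "u \<in> (+) (- x) ` K \<longleftrightarrow> x + u \<in> K" for x u
  proof
    assume "x + u \<in> K"
    then show "u \<in> (+) (- x) ` K" by (rule rev_image_eqI) simp
  qed auto
  then have "rec_cone K = (\<Inter>x\<in>K. (+) (- x) ` K)"
    by (auto simp: rec_cone_iff)
  then show ?thesis
    by (metis closed_INT closed_translation assms)
qed

lemma rec_cone_add_scaleR_mem:
  assumes "convex K" and u: "u \<in> rec_cone K" and "x \<in> K" and "0 \<le> t"
  shows "x + t *\<^sub>R u \<in> K"
proof -
  have steps: "x + real n *\<^sub>R u \<in> K" for n
  proof (induction n)
    case 0
    then show ?case using \<open>x \<in> K\<close> by simp
  next
    case (Suc n)
    then have "(x + real n *\<^sub>R u) + u \<in> K" using u by (simp add: rec_cone_iff)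
    then show ?case by (simp add: algebra_simps)
  qed
  obtain n :: nat where "t < real n"
    using reals_Archimedean2 by blast
  with \<open>0 \<le> t\<close> have "(1 - t / real n) *\<^sub>R x + (t / real n) *\<^sub>R (x + real n *\<^sub>R u) \<in> K"
    by (intro convexD[OF \<open>convex K\<close> \<open>x \<in> K\<close> steps]) auto
  moreover from \<open>t < real n\<close> \<open>0 \<le> t\<close>
  have "(1 - t / real n) *\<^sub>R x + (t / real n) *\<^sub>R (x + real n *\<^sub>R u) = x + t *\<^sub>R u"
    by (simp add: algebra_simps)
  ultimately show ?thesis by simp
qed

lemma cone_rec_cone: "convex K \<Longrightarrow> cone (rec_cone K)"
  by (auto simp: cone_def rec_cone_iff intro: rec_cone_add_scaleR_mem)

lemma mem_rec_cone_if_ray_subset: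
  fixes K :: "'a::real_normed_vector set"
  assumes "closed K" "convex K" "x0 \<in> K" and ray: "\<And>t. 0 \<le> t \<Longrightarrow> x0 + t *\<^sub>R u \<in> K"
  shows "u \<in> rec_cone K"
  unfolding rec_cone_iff
proof
  fix y assume "y \<in> K"
  define s where "s n = inverse (real (Suc n))" for n
  define z where "z n = (1 - s n) *\<^sub>R y + s n *\<^sub>R (x0 + real (Suc n) *\<^sub>R u)" for n
  have "z n \<in> K" for n
    unfolding z_def using \<open>y \<in> K\<close> ray[of "real (Suc n)"]
    by (intro convexD[OF \<open>convex K\<close>]) (auto simp: s_def field_simps)
  moreover have "z = (\<lambda>n. y + u + s n *\<^sub>R (x0 - y))"
  proof
    fix n
    have "s n * real (Suc n) = 1"
      by (simp add: s_def)
    then show "z n = y + u + s n *\<^sub>R (x0 - y)"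
      by (simp add: z_def algebra_simps) (metis scaleR_add_left scaleR_one)
  qed
  then have "z \<longlonglongrightarrow> y + u + 0 *\<^sub>R (x0 - y)"
    unfolding s_def by (simp only:) (intro tendsto_intros LIMSEQ_inverse_real_of_nat)
  ultimately show "y + u \<in> K"
    using closed_sequentially[OF \<open>closed K\<close>] by fastforce
qed

lemma mem_rec_cone_if_normalized_limit:
  fixes K :: "'a::real_normed_vector set"
  assumes "closed K" "convex K" and X: "\<And>n. X n \<in> K"
    and unbounded: "filterlim (\<lambda>n. norm (X n)) at_top sequentially"
    and lim: "(\<lambda>n. X n /\<^sub>R norm (X n)) \<longlonglongrightarrow> u"
  shows "u \<in> rec_cone K"
proof (rule mem_rec_cone_if_ray_subset[OF assms(1,2) X])
  fix t :: real assume "0 \<le> t"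
  define s where "s n = t / norm (X n)" for n
  have s: "s \<longlonglongrightarrow> 0"
    unfolding s_def
    by (intro tendsto_divide_0[OF tendsto_const] filterlim_at_top_imp_at_infinity unbounded)
  define z where "z n = (1 - s n) *\<^sub>R X 0 + s n *\<^sub>R X n" for n
  have "eventually (\<lambda>n. s n < 1) sequentially"
    using s by (rule order_tendstoD) simp
  then have "eventually (\<lambda>n. z n \<in> K) sequentially"
    by eventually_elim (use \<open>0 \<le> t\<close> in \<open>auto simp: z_def s_def intro!: convexD[OF \<open>convex K\<close> X X]\<close>)
  moreover have "z = (\<lambda>n. X 0 - s n *\<^sub>R X 0 + t *\<^sub>R (X n /\<^sub>R norm (X n)))"
    by (auto simp: z_def s_def algebra_simps divide_inverse)
  then have "z \<longlonglongrightarrow> X 0 - 0 *\<^sub>R X 0 + t *\<^sub>R u"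
    by (simp only:) (intro tendsto_intros s lim)
  ultimately show "X 0 + t *\<^sub>R u \<in> K"
    using Lim_in_closed_set[OF \<open>closed K\<close>] by fastforce
qed

lemma mem_interior_dual_cone_iff:
  fixes C :: "'a::real_inner set"
  shows "\<alpha> \<in> interior (dual_cone C) \<longleftrightarrow> (\<exists>e>0. \<forall>u\<in>C. e * norm u \<le> \<alpha> \<bullet> u)"
proof
  assume "\<alpha> \<in> interior (dual_cone C)"
  then obtain e where "e > 0" and ball: "ball \<alpha> e \<subseteq> dual_cone C"
    using mem_interior by blast
  have "e / 2 * norm u \<le> \<alpha> \<bullet> u" if "u \<in> C" for u
  proof (cases "u = 0")
    case False
    define \<beta> where "\<beta> = \<alpha> - (e / 2 / norm u) *\<^sub>R u"
    have "\<beta> \<in> ball \<alpha> e"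
      using \<open>e > 0\<close> False by (simp add: \<beta>_def dist_norm)
    then have "0 \<le> \<beta> \<bullet> u"
      using ball \<open>u \<in> C\<close> by (auto simp: dual_cone_def)
    also have "\<beta> \<bullet> u = \<alpha> \<bullet> u - e / 2 * norm u"
      using False by (simp add: \<beta>_def inner_diff_left dot_square_norm power2_eq_square)
    finally show ?thesis by simp
  qed simp
  then show "\<exists>e>0. \<forall>u\<in>C. e * norm u \<le> \<alpha> \<bullet> u"
    using \<open>e > 0\<close> by (intro exI[of _ "e / 2"]) auto
next
  assume "\<exists>e>0. \<forall>u\<in>C. e * norm u \<le> \<alpha> \<bullet> u"
  then obtain e where "e > 0" and e: "\<And>u. u \<in> C \<Longrightarrow> e * norm u \<le> \<alpha> \<bullet> u"
    by blast
  have "\<beta> \<in> dual_cone C" if "\<beta> \<in> ball \<alpha> e" for \<beta>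
    unfolding dual_cone_def mem_Collect_eq
  proof
    fix u assume "u \<in> C"
    have "(\<alpha> - \<beta>) \<bullet> u \<le> norm (\<alpha> - \<beta>) * norm u"
      by (rule norm_cauchy_schwarz)
    also have "\<dots> \<le> e * norm u"
      using that by (intro mult_right_mono) (auto simp: dist_norm)
    finally show "0 \<le> \<beta> \<bullet> u"
      using e[OF \<open>u \<in> C\<close>] by (simp add: inner_diff_left)
  qed
  then show "\<alpha> \<in> interior (dual_cone C)"
    using \<open>e > 0\<close> mem_interior by blast
qed

lemma uniformly_positive_on_closed_cone:
  fixes C :: "'a::euclidean_space set"
  assumes "closed C" "cone C" and pos: "\<And>u. u \<in> C \<Longrightarrow> u \<noteq> 0 \<Longrightarrow> 0 < \<alpha> \<bullet> u"
  shows "\<exists>e>0. \<forall>u\<in>C. e * norm u \<le> \<alpha> \<bullet> u"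
proof -
  define S where "S = C \<inter> sphere 0 1"
  have "compact S"
    unfolding S_def using \<open>closed C\<close> by (intro closed_Int_compact) auto
  obtain m where "m > 0" and m: "\<And>w. w \<in> S \<Longrightarrow> m \<le> \<alpha> \<bullet> w"
  proof (cases "S = {}")
    case False
    have "\<exists>w0\<in>S. \<forall>w\<in>S. \<alpha> \<bullet> w0 \<le> \<alpha> \<bullet> w"
      by (rule continuous_attains_inf[OF \<open>compact S\<close> False]) (intro continuous_intros)
    then obtain w0 where "w0 \<in> S" and w0: "\<And>w. w \<in> S \<Longrightarrow> \<alpha> \<bullet> w0 \<le> \<alpha> \<bullet> w"
      by blast
    moreover have "0 < \<alpha> \<bullet> w0"
      using \<open>w0 \<in> S\<close> by (intro pos) (auto simp: S_def)
    ultimately show ?thesis using that by blast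
  qed (auto intro: that[of 1])
  have "m * norm u \<le> \<alpha> \<bullet> u" if "u \<in> C" for u
  proof (cases "u = 0")
    case False
    then have "u /\<^sub>R norm u \<in> S"
      using \<open>cone C\<close> \<open>u \<in> C\<close> by (simp add: S_def mem_cone)
    then have "m \<le> (\<alpha> \<bullet> u) / norm u"
      using m by (fastforce simp: divide_inverse mult.commute)
    with False show ?thesis by (simp add: field_simps)
  qed simp
  with \<open>m > 0\<close> show ?thesis by blast
qed

lemma unbounded_sequence_rec_cone_direction:
  fixes K :: "'a::euclidean_space set"
  assumes "closed K" "convex K" and X: "\<And>n. X n \<in> K" "\<And>n. X n \<noteq> 0"
    and unbounded: "filterlim (\<lambda>n. norm (X n)) at_top sequentially"
  obtains r u where "strict_mono r" "norm u = 1" "u \<in> rec_cone K"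
    "(\<lambda>n. X (r n) /\<^sub>R norm (X (r n))) \<longlonglongrightarrow> u"
proof -
  define W where "W n = X n /\<^sub>R norm (X n)" for n
  have "W n \<in> sphere 0 1" for n
    using X(2)[of n] by (simp add: W_def)
  then obtain r u where "strict_mono r" "u \<in> sphere 0 1" and "(W \<circ> r) \<longlonglongrightarrow> u"
    using compact_sphere[THEN compact_imp_seq_compact, THEN seq_compactE] by metis
  then have lim: "(\<lambda>n. X (r n) /\<^sub>R norm (X (r n))) \<longlonglongrightarrow> u"
    by (simp add: W_def o_def)
  moreover have "filterlim (\<lambda>n. norm (X (r n))) at_top sequentially"
    using filterlim_compose[OF unbounded filterlim_subseq[OF \<open>strict_mono r\<close>]] by simp
  then have "u \<in> rec_cone K"
    using X(1) lim by (intro mem_rec_cone_if_normalized_limit[OF assms(1,2)])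
  ultimately show ?thesis
    using that \<open>strict_mono r\<close> \<open>u \<in> sphere 0 1\<close> by simp
qed

lemma inner_coercive_on_closed_convex:
  fixes K :: "'a::euclidean_space set"
  assumes "closed K" "convex K" "e > 0" and e: "\<And>u. u \<in> rec_cone K \<Longrightarrow> e * norm u \<le> \<alpha> \<bullet> u"
  shows "\<exists>C. \<forall>x\<in>K. e / 2 * norm x - C \<le> \<alpha> \<bullet> x"
proof (rule ccontr)
  assume "\<not> ?thesis"
  then have "\<forall>n::nat. \<exists>x\<in>K. \<alpha> \<bullet> x < e / 2 * norm x - real n"
    by (metis not_le)
  then obtain X where X: "\<And>n. X n \<in> K" and below: "\<And>n. \<alpha> \<bullet> X n < e / 2 * norm (X n) - real n"
    by metis
  define L where "L = e / 2 + norm \<alpha>"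
  have "L > 0"
    using \<open>e > 0\<close> norm_ge_zero[of \<alpha>] unfolding L_def by linarith
  have X_bound: "real n < L * norm (X n)" for n
  proof -
    have "- (norm \<alpha> * norm (X n)) \<le> \<alpha> \<bullet> X n"
      using norm_cauchy_schwarz[of "- \<alpha>" "X n"] by simp
    with below[of n] show ?thesis
      by (simp add: L_def algebra_simps)
  qed
  have X_nonzero: "X n \<noteq> 0" for n
    using X_bound[of n] by auto
  have "real n * inverse L \<le> norm (X n)" for n
    using X_bound[of n] \<open>L > 0\<close> by (simp add: field_simps)
  then have unbounded: "filterlim (\<lambda>n. norm (X n)) at_top sequentially"
    using \<open>L > 0\<close>
    by (intro filterlim_at_top_mono[OF filterlim_at_top_mult_tendsto_pos[OF tendsto_const[of "inverse L"] _ filterlim_real_sequentially]])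
       auto
  obtain r u where "norm u = 1" "u \<in> rec_cone K"
    and lim: "(\<lambda>n. X (r n) /\<^sub>R norm (X (r n))) \<longlonglongrightarrow> u"
    by (rule unbounded_sequence_rec_cone_direction[OF assms(1,2) X X_nonzero unbounded])
  have "e \<le> \<alpha> \<bullet> u"
    using e[OF \<open>u \<in> rec_cone K\<close>] \<open>norm u = 1\<close> by simp
  moreover have "\<alpha> \<bullet> (X n /\<^sub>R norm (X n)) \<le> e / 2" for n
    using below[of n] X_nonzero[of n] by (simp add: field_simps)
  then have "\<alpha> \<bullet> u \<le> e / 2"
    by (intro LIMSEQ_le_const2[OF tendsto_inner[OF tendsto_const lim]]) auto
  ultimately show False
    using \<open>e > 0\<close> by simp
qed

lemma summable_exp_neg_mult_poly:
  fixes c :: real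
  assumes "c > 0"
  shows "summable (\<lambda>n::nat. exp (- c * real n) * (real n + 1) ^ d)"
proof (rule summable_comparison_test_bigo)
  have "(\<lambda>n. norm (exp (- c / 2 * real n))) = (\<lambda>n. exp (- c / 2) ^ n)"
    by (simp add: exp_of_nat_mult[symmetric] mult.commute)
  then show "summable (\<lambda>n. norm (exp (- c / 2 * real n)))"
    using assms by simp
  show "(\<lambda>n. exp (- c * real n) * (real n + 1) ^ d) \<in> O(\<lambda>n. exp (- c / 2 * real n))"
    using assms by real_asymp
qed

lemma integrable_exp_neg_norm:
  fixes c :: real
  assumes "c > 0"
  shows "integrable lborel (\<lambda>x::'a::euclidean_space. exp (- c * norm x))"
proof (rule integrableI_bounded)
  show "(\<lambda>x::'a. exp (- c * norm x)) \<in> borel_measurable lborel"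
    by measurable
  define V where "V = unit_ball_vol (real DIM('a))"
  have "V \<ge> 0"
    by (simp add: V_def)
  define F where "F n = (\<lambda>x. ennreal (exp (- c * real n)) * indicator (cball (0::'a) (real n + 1)) x)" for n
  have "ennreal (norm (exp (- c * norm x))) \<le> (\<Sum>n. F n x)" for x :: 'a
  proof -
    define n where "n = nat \<lfloor>norm x\<rfloor>"
    have "real n \<le> norm x" "norm x \<le> real n + 1"
      unfolding n_def by (simp_all add: of_nat_nat)
    then have "ennreal (norm (exp (- c * norm x))) \<le> F n x"
      using \<open>c > 0\<close> by (auto simp: F_def intro!: ennreal_leI)
    also have "\<dots> \<le> (\<Sum>n. F n x)"
      using sum_le_suminf[of "\<lambda>i. F i x" "{n}"] by simp
    finally show ?thesis .
  qed
  then have "(\<integral>\<^sup>+ x. norm (exp (- c * norm (x::'a))) \<partial>lborel) \<le> (\<integral>\<^sup>+ x. (\<Sum>n. F n x) \<partial>lborel)"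
    by (intro nn_integral_mono)
  also have "\<dots> = (\<Sum>n. \<integral>\<^sup>+ x. F n x \<partial>lborel)"
    unfolding F_def by (intro nn_integral_suminf) (measurable, simp)
  also have "\<dots> = (\<Sum>n. ennreal (V * (exp (- c * real n) * (real n + 1) ^ DIM('a))))"
    using \<open>V \<ge> 0\<close>
    by (simp add: F_def nn_integral_cmult_indicator emeasure_cball V_def ennreal_mult' mult_ac)
  also have "\<dots> = ennreal (\<Sum>n. V * (exp (- c * real n) * (real n + 1) ^ DIM('a)))"
    using \<open>V \<ge> 0\<close> summable_exp_neg_mult_poly[OF \<open>c > 0\<close>]
    by (intro suminf_ennreal2) (auto intro: summable_mult)
  also have "\<dots> < \<infinity>"
    by simp
  finally show "(\<integral>\<^sup>+ x. norm (exp (- c * norm (x::'a))) \<partial>lborel) < \<infinity>" .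
qed

lemma g_fun_nonneg: "0 \<le> g_fun K \<alpha> x"
  by (simp add: g_fun_def)

lemma borel_measurable_g_fun:
  assumes [measurable]: "K \<in> sets borel"
  shows "g_fun K \<alpha> \<in> borel_measurable lborel"
  unfolding g_fun_def by measurable

lemma exp_neg_inner_ge_on_ball:
  assumes "y \<in> ball x r"
  shows "exp (- (\<alpha> \<bullet> x) - norm \<alpha> * r) \<le> exp (- (\<alpha> \<bullet> y))"
proof -
  have "\<alpha> \<bullet> (y - x) \<le> norm \<alpha> * norm (y - x)"
    by (rule norm_cauchy_schwarz)
  also have "\<dots> \<le> norm \<alpha> * r"
    using assms by (intro mult_left_mono) (auto simp: dist_norm norm_minus_commute)
  finally show ?thesis
    by (simp add: inner_diff_right)
qed

lemma integral_ge_const_mult_measure: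
  fixes f :: "'a \<Rightarrow> real"
  assumes "integrable M f" "A \<in> sets M" "emeasure M A < \<infinity>"
    and "\<And>x. x \<in> space M \<Longrightarrow> 0 \<le> f x" and "\<And>x. x \<in> A \<Longrightarrow> m \<le> f x"
  shows "m * measure M A \<le> integral\<^sup>L M f"
proof -
  have "integral\<^sup>L M (\<lambda>x. m * indicator A x) \<le> integral\<^sup>L M f"
    using assms by (intro integral_mono) (auto split: split_indicator)
  then show ?thesis
    using assms(2,3) by simp
qed

lemma disjoint_family_balls_along_line:
  fixes v :: "'a::real_normed_vector"
  assumes "norm v = 2 * r"
  shows "disjoint_family (\<lambda>k::nat. ball (x + real k *\<^sub>R v) r)"
  unfolding disjoint_family_on_def
proof (intro ballI impI)
  fix j k :: nat assume "j \<noteq> k"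
  then have "1 \<le> \<bar>real j - real k\<bar>"
    by linarith
  then have far: "2 * r \<le> dist (x + real j *\<^sub>R v) (x + real k *\<^sub>R v)"
    using assms norm_ge_zero[of v] mult_right_mono[of 1 "\<bar>real j - real k\<bar>" "2 * r"]
    by (simp add: dist_norm flip: scaleR_diff_left)
  show "ball (x + real j *\<^sub>R v) r \<inter> ball (x + real k *\<^sub>R v) r = {}"
  proof (intro equals0I)
    fix y assume "y \<in> ball (x + real j *\<^sub>R v) r \<inter> ball (x + real k *\<^sub>R v) r"
    then have "dist (x + real j *\<^sub>R v) (x + real k *\<^sub>R v) < 2 * r"
      using dist_triangle[of "x + real j *\<^sub>R v" "x + real k *\<^sub>R v" y] by (simp add: dist_commute)
    with far show False
      by simp
  qed
qed

lemma not_integrable_if_ge_on_disjoint_balls: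
  fixes f :: "'a::euclidean_space \<Rightarrow> real"
  assumes disj: "disjoint_family (\<lambda>k::nat. ball (c k) r)" and "r > 0" "m > 0"
    and nonneg: "\<And>x. 0 \<le> f x" and ge: "\<And>k x. x \<in> ball (c k) r \<Longrightarrow> m \<le> f x"
  shows "\<not> integrable lborel f"
proof
  assume int: "integrable lborel f"
  define V where "V = measure lborel (ball (0::'a) r)"
  have lower: "m * (real N * V) \<le> integral\<^sup>L lborel f" for N
  proof -
    have "measure lborel (\<Union>k<N. ball (c k) r) = (\<Sum>k<N. measure lborel (ball (c k) r))"
      using disj emeasure_bounded_finite[OF bounded_ball]
      by (intro measure_finite_Union) (auto simp: disjoint_family_on_def less_top)
    also have "\<dots> = real N * V"
      using \<open>r > 0\<close> by (simp add: V_def content_ball)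
    finally have "measure lborel (\<Union>k<N. ball (c k) r) = real N * V" .
    moreover have "bounded (\<Union>k<N. ball (c k) r)"
      by (auto intro!: bounded_UN)
    then have "m * measure lborel (\<Union>k<N. ball (c k) r) \<le> integral\<^sup>L lborel f"
      using int ge nonneg emeasure_bounded_finite by (intro integral_ge_const_mult_measure) auto
    ultimately show ?thesis
      by simp
  qed
  have "m * V > 0"
    using \<open>r > 0\<close> \<open>m > 0\<close> by (simp add: V_def)
  obtain N :: nat where "integral\<^sup>L lborel f / (m * V) < real N"
    using reals_Archimedean2 by blast
  then have "integral\<^sup>L lborel f < real N * (m * V)"
    using \<open>m * V > 0\<close> by (simp add: pos_divide_less_eq)
  with lower[of N] show False
    by (simp add: mult_ac)
qed

lemma not_integrable_g_fun_if_rec_cone_nonpos: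
  fixes K :: "'a::euclidean_space set"
  assumes "convex K" "interior K \<noteq> {}"
    and u: "u \<in> rec_cone K" "u \<noteq> 0" "\<alpha> \<bullet> u \<le> 0"
  shows "\<not> integrable lborel (g_fun K \<alpha>)"
proof -
  obtain x0 r where "r > 0" and ball: "ball x0 r \<subseteq> K"
    using \<open>interior K \<noteq> {}\<close> by (meson all_not_in_conv mem_interior)
  define v where "v = (2 * r / norm u) *\<^sub>R u"
  have "v \<in> rec_cone K"
    using u \<open>r > 0\<close> cone_rec_cone[OF \<open>convex K\<close>] by (simp add: v_def mem_cone)
  have "norm v = 2 * r" "\<alpha> \<bullet> v \<le> 0"
    using u \<open>r > 0\<close> by (auto simp: v_def intro!: divide_nonpos_pos mult_nonneg_nonpos)
  define m where "m = exp (- (\<alpha> \<bullet> x0) - norm \<alpha> * r)"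
  have "m \<le> g_fun K \<alpha> y" if "y \<in> ball (x0 + real k *\<^sub>R v) r" for k y
  proof -
    have "y - real k *\<^sub>R v \<in> K"
      using that ball by (auto simp: dist_norm algebra_simps)
    then have "y \<in> K"
      using rec_cone_add_scaleR_mem[OF \<open>convex K\<close> \<open>v \<in> rec_cone K\<close>, of _ "real k"] by fastforce
    have "m \<le> exp (- (\<alpha> \<bullet> (x0 + real k *\<^sub>R v)) - norm \<alpha> * r)"
      using \<open>\<alpha> \<bullet> v \<le> 0\<close> by (simp add: m_def inner_add_right mult_nonneg_nonpos)
    also have "\<dots> \<le> exp (- (\<alpha> \<bullet> y))"
      using that by (rule exp_neg_inner_ge_on_ball)
    finally show ?thesis
      using \<open>y \<in> K\<close> by (simp add: g_fun_def)
  qed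
  then show ?thesis
    using disjoint_family_balls_along_line[OF \<open>norm v = 2 * r\<close>] \<open>r > 0\<close>
    by (intro not_integrable_if_ge_on_disjoint_balls[where m = m]) (auto simp: m_def g_fun_nonneg)
qed

lemma c_const_pos:
  fixes K :: "'a::euclidean_space set"
  assumes "interior K \<noteq> {}" "integrable lborel (g_fun K \<alpha>)"
  shows "0 < c_const K \<alpha>"
proof -
  obtain x0 r where "r > 0" and ball: "ball x0 r \<subseteq> K"
    using \<open>interior K \<noteq> {}\<close> by (meson all_not_in_conv mem_interior)
  have "exp (- (\<alpha> \<bullet> x0) - norm \<alpha> * r) * measure lborel (ball x0 r) \<le> c_const K \<alpha>"
    unfolding c_const_def
    using assms(2) ball exp_neg_inner_ge_on_ball[of _ x0 r \<alpha>] emeasure_bounded_finite[OF bounded_ball]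
    by (intro integral_ge_const_mult_measure) (auto simp: g_fun_nonneg g_fun_def)
  moreover have "0 < exp (- (\<alpha> \<bullet> x0) - norm \<alpha> * r) * measure lborel (ball x0 r)"
    using \<open>r > 0\<close> by simp
  ultimately show ?thesis
    by linarith
qed

lemma line_free_if_pos_on_rec_cone:
  fixes K :: "'a::real_inner set"
  assumes "closed K" "convex K" and pos: "\<And>u. u \<in> rec_cone K \<Longrightarrow> u \<noteq> 0 \<Longrightarrow> 0 < \<alpha> \<bullet> u"
  shows "line_free K"
  unfolding line_free_def
proof clarify
  fix x u assume "u \<noteq> 0" and line: "\<forall>t. x + t *\<^sub>R u \<in> K"
  have "x \<in> K"
    using line[rule_format, of 0] by simp
  have "u \<in> rec_cone K" "- u \<in> rec_cone K"
    using line[rule_format, of "- t" for t]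
    by (auto intro!: mem_rec_cone_if_ray_subset[OF assms(1,2) \<open>x \<in> K\<close>] line[rule_format])
  with pos[of u] pos[of "- u"] \<open>u \<noteq> 0\<close> show False
    by simp
qed

theorem integrable_g_fun_iff:
  fixes K :: "'a::euclidean_space set"
  assumes "closed K" "convex K" "interior K \<noteq> {}"
  shows "integrable lborel (g_fun K \<alpha>) \<longleftrightarrow> line_free K \<and> \<alpha> \<in> interior (dual_cone (rec_cone K))"
proof
  assume int: "integrable lborel (g_fun K \<alpha>)"
  have pos: "0 < \<alpha> \<bullet> u" if "u \<in> rec_cone K" "u \<noteq> 0" for u
    using not_integrable_g_fun_if_rec_cone_nonpos[OF assms(2,3) that] int by force
  have "line_free K"
    using line_free_if_pos_on_rec_cone[OF assms(1,2) pos] .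
  moreover have "\<alpha> \<in> interior (dual_cone (rec_cone K))"
    unfolding mem_interior_dual_cone_iff
    by (intro uniformly_positive_on_closed_cone closed_rec_cone cone_rec_cone assms pos)
  ultimately show "line_free K \<and> \<alpha> \<in> interior (dual_cone (rec_cone K))"
    by blast
next
  assume "line_free K \<and> \<alpha> \<in> interior (dual_cone (rec_cone K))"
  then obtain e where "e > 0" and e: "\<forall>u\<in>rec_cone K. e * norm u \<le> \<alpha> \<bullet> u"
    unfolding mem_interior_dual_cone_iff by blast
  then obtain C where C: "\<forall>x\<in>K. e / 2 * norm x - C \<le> \<alpha> \<bullet> x"
    using inner_coercive_on_closed_convex[OF assms(1,2) \<open>e > 0\<close>] by blast
  show "integrable lborel (g_fun K \<alpha>)"
  proof (rule Bochner_Integration.integrable_bound)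
    show "integrable lborel (\<lambda>x::'a. exp C * exp (- (e / 2) * norm x))"
      using integrable_exp_neg_norm[of "e / 2"] \<open>e > 0\<close> by simp
    show "g_fun K \<alpha> \<in> borel_measurable lborel"
      using \<open>closed K\<close> by (intro borel_measurable_g_fun) simp
    show "AE x in lborel. norm (g_fun K \<alpha> x) \<le> norm (exp C * exp (- (e / 2) * norm x))"
      using C by (intro AE_I2) (auto simp: g_fun_def exp_add[symmetric] split: split_indicator)
  qed
qed

lemma convex_supp_if_log_concave:
  fixes f :: "'a::real_vector \<Rightarrow> real"
  assumes "log_concave f"
  shows "convex (supp f)"
  unfolding convex_alt
proof (intro ballI allI impI)
  fix x y and t :: real
  assume "x \<in> supp f" "y \<in> supp f" and t: "0 \<le> t \<and> t \<le> 1"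
  show "(1 - t) *\<^sub>R x + t *\<^sub>R y \<in> supp f"
  proof (cases "t = 0 \<or> t = 1")
    case False
    with t have "f x powr (1 - t) * f y powr t \<le> f ((1 - t) *\<^sub>R x + t *\<^sub>R y)"
      using assms by (simp add: log_concave_def)
    moreover have "0 < f x powr (1 - t) * f y powr t"
      using \<open>x \<in> supp f\<close> \<open>y \<in> supp f\<close> by (simp add: supp_def)
    ultimately show ?thesis
      by (simp add: supp_def)
  qed (use \<open>x \<in> supp f\<close> \<open>y \<in> supp f\<close> in auto)
qed

lemma interior_nonempty_if_integral_nonzero:
  fixes f :: "'a::euclidean_space \<Rightarrow> real"
  assumes "convex S" "S \<in> sets lborel" and vanish: "\<And>x. x \<notin> S \<Longrightarrow> f x = 0"
    and "integral\<^sup>L lborel f \<noteq> 0"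
  shows "interior S \<noteq> {}"
proof
  assume "interior S = {}"
  then have "S \<in> null_sets lebesgue"
    using negligible_convex_interior[OF \<open>convex S\<close>] negligible_iff_null_sets by blast
  then have "S \<in> null_sets lborel"
    using \<open>S \<in> sets lborel\<close> null_sets_completion_iff by blast
  then have "AE x in lborel. f x = 0"
    using AE_not_in vanish by (metis (mono_tags, lifting) AE_mp AE_I2)
  then have "integral\<^sup>L lborel f = 0"
    by (rule integral_eq_zero_AE)
  with assms(4) show False ..
qed

lemma supp_exp_affine_indicator:
  fixes K :: "'a::real_inner set"
  shows "supp (\<lambda>x. exp (a \<bullet> x + b) * indicator K x) = K"
  by (auto simp: supp_def split: split_indicator)

lemma log_concave_exp_affine_indicator:
  fixes K :: "'a::real_inner set"
  assumes "convex K"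
  shows "log_concave (\<lambda>x. exp (a \<bullet> x + b) * indicator K x)"
  unfolding log_concave_def
proof (intro conjI allI impI)
  fix x y :: 'a and t :: real
  assume t: "0 < t \<and> t < 1"
  let ?z = "(1 - t) *\<^sub>R x + t *\<^sub>R y"
  show "(exp (a \<bullet> x + b) * indicator K x) powr (1 - t) * (exp (a \<bullet> y + b) * indicator K y) powr t
        \<le> exp (a \<bullet> ?z + b) * indicator K ?z"
  proof (cases "x \<in> K \<and> y \<in> K")
    case True
    then have "?z \<in> K"
      using t convexD[OF assms, of x y "1 - t" t] by simp
    have "(1 - t) * (a \<bullet> x + b) + t * (a \<bullet> y + b) = a \<bullet> ?z + b"
      by (simp add: inner_add_right algebra_simps)
    with True \<open>?z \<in> K\<close> show ?thesis
      by (simp add: powr_def exp_add[symmetric])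
  qed (auto simp: indicator_def)
qed simp

lemma usc_exp_affine_indicator:
  fixes K :: "'a::real_inner set"
  assumes "closed K"
  shows "usc (\<lambda>x. exp (a \<bullet> x + b) * indicator K x)"
  unfolding usc_def
proof
  fix s :: real
  show "open {x. exp (a \<bullet> x + b) * indicator K x < s}"
  proof (cases "s \<le> 0")
    case True
    then have "{x. exp (a \<bullet> x + b) * indicator K x < s} = {}"
      by (auto simp: indicator_def) (smt (verit) exp_gt_zero)
    then show ?thesis
      by simp
  next
    case False
    then have "{x. exp (a \<bullet> x + b) * indicator K x < s} = - K \<union> {x. exp (a \<bullet> x + b) < s}"
      by (auto simp: indicator_def)
    moreover have "open {x. exp (a \<bullet> x + b) < s}"
      by (intro open_Collect_less continuous_intros)
    ultimately show ?thesis
      using assms by auto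
  qed
qed

lemma log_1_affine_exp_affine_indicator:
  assumes "closed K"
  shows "log_1_affine (\<lambda>x. exp (a \<bullet> x + b) * indicator K x)"
  unfolding log_1_affine_def supp_exp_affine_indicator
  using assms by auto

lemma g_fun_div_eq_exp_affine_indicator:
  assumes "c > 0"
  shows "(\<lambda>x. g_fun K \<alpha> x / c) = (\<lambda>x. exp ((- \<alpha>) \<bullet> x + - ln c) * indicator K x)"
  using assms by (simp add: g_fun_def exp_diff exp_minus divide_inverse mult_ac)

lemma normalized_g_fun_mem_F_d:
  fixes K :: "'a::euclidean_space set"
  assumes "closed K" "convex K" "interior K \<noteq> {}"
    and "line_free K" "\<alpha> \<in> interior (dual_cone (rec_cone K))"
  shows "(\<lambda>x. g_fun K \<alpha> x / c_const K \<alpha>) \<in> F_d \<and> log_1_affine (\<lambda>x. g_fun K \<alpha> x / c_const K \<alpha>)"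
proof -
  have int: "integrable lborel (g_fun K \<alpha>)"
    using integrable_g_fun_iff assms by blast
  then have "c_const K \<alpha> > 0"
    using c_const_pos \<open>interior K \<noteq> {}\<close> by blast
  then have density: "is_density (\<lambda>x. g_fun K \<alpha> x / c_const K \<alpha>)"
    using int by (simp add: is_density_def g_fun_nonneg c_const_def)
  note eq = g_fun_div_eq_exp_affine_indicator[OF \<open>c_const K \<alpha> > 0\<close>]
  show ?thesis
    unfolding F_d_def mem_Collect_eq
  proof (intro conjI density)
    show "log_concave (\<lambda>x. g_fun K \<alpha> x / c_const K \<alpha>)"
      unfolding eq by (rule log_concave_exp_affine_indicator[OF \<open>convex K\<close>])
    show "usc (\<lambda>x. g_fun K \<alpha> x / c_const K \<alpha>)"
      unfolding eq by (rule usc_exp_affine_indicator[OF \<open>closed K\<close>])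
    show "log_1_affine (\<lambda>x. g_fun K \<alpha> x / c_const K \<alpha>)"
      unfolding eq by (rule log_1_affine_exp_affine_indicator[OF \<open>closed K\<close>])
  qed
qed

lemma log_1_affine_eq_scaled_g_fun:
  fixes f :: "'a::euclidean_space \<Rightarrow> real"
  assumes nonneg: "\<And>x. 0 \<le> f x" and "log_1_affine f"
  obtains \<alpha> b where "f = (\<lambda>x. exp b * g_fun (supp f) \<alpha> x)"
proof -
  obtain a b where ab: "\<And>x. x \<in> supp f \<Longrightarrow> ln (f x) = a \<bullet> x + b"
    using \<open>log_1_affine f\<close> by (auto simp: log_1_affine_def)
  have "f x = exp b * g_fun (supp f) (- a) x" for x
  proof (cases "x \<in> supp f")
    case True
    then have "f x > 0"
      using nonneg[of x] by (simp add: supp_def)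
    then have "f x = exp (a \<bullet> x + b)"
      using ab[OF True] by (metis exp_ln)
    with True show ?thesis
      by (simp add: g_fun_def exp_add)
  qed (simp add: supp_def g_fun_def)
  then show ?thesis
    using that by blast
qed

lemma log_1_affine_density_eq_normalized_g_fun:
  fixes f :: "'a::euclidean_space \<Rightarrow> real"
  assumes "f \<in> F_d" "log_1_affine f"
  obtains K \<alpha> where "closed K" "convex K" "interior K \<noteq> {}" "line_free K"
    "\<alpha> \<in> interior (dual_cone (rec_cone K))" "f = (\<lambda>x. g_fun K \<alpha> x / c_const K \<alpha>)"
proof -
  define K where "K = supp f"
  have "closed K"
    using \<open>log_1_affine f\<close> by (simp add: log_1_affine_def K_def)
  have "convex K"
    using \<open>f \<in> F_d\<close> convex_supp_if_log_concave by (auto simp: F_d_def K_def)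
  have density: "\<And>x. 0 \<le> f x" "integrable lborel f" "integral\<^sup>L lborel f = 1"
    using \<open>f \<in> F_d\<close> by (simp_all add: F_d_def is_density_def)
  then have "interior K \<noteq> {}"
    using \<open>closed K\<close> \<open>convex K\<close>
    by (intro interior_nonempty_if_integral_nonzero[of K f]) (auto simp: K_def supp_def)
  obtain \<alpha> b where f_eq: "f = (\<lambda>x. exp b * g_fun K \<alpha> x)"
    using log_1_affine_eq_scaled_g_fun[OF density(1) \<open>log_1_affine f\<close>] unfolding K_def by blast
  have "g_fun K \<alpha> = (\<lambda>x. exp (- b) * f x)"
    by (simp add: f_eq mult.assoc[symmetric] exp_add[symmetric])
  then have int: "integrable lborel (g_fun K \<alpha>)" and c: "c_const K \<alpha> = exp (- b)"
    using density by (simp_all add: c_const_def)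
  show ?thesis
  proof (rule that[of K \<alpha>])
    show "line_free K" "\<alpha> \<in> interior (dual_cone (rec_cone K))"
      using int integrable_g_fun_iff[OF \<open>closed K\<close> \<open>convex K\<close> \<open>interior K \<noteq> {}\<close>] by blast+
    show "f = (\<lambda>x. g_fun K \<alpha> x / c_const K \<alpha>)"
      by (simp add: f_eq c exp_minus field_simps)
  qed fact+
qed

theorem propositionS15:
  shows "(\<forall>(K::'a::euclidean_space set) \<alpha>. closed K \<and> convex K \<and> interior K \<noteq> {} \<longrightarrow>
            (integrable lborel (g_fun K \<alpha>) \<longleftrightarrow>
               line_free K \<and> \<alpha> \<in> interior (dual_cone (rec_cone K))))
       \<and> {f \<in> (F_d :: ('a \<Rightarrow> real) set). log_1_affine f} =
         {(\<lambda>x. g_fun K \<alpha> x / c_const K \<alpha>) | K \<alpha>.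
            closed K \<and> convex K \<and> interior K \<noteq> {} \<and> line_free K \<and>
            \<alpha> \<in> interior (dual_cone (rec_cone K))}"
proof (intro conjI allI impI equalityI subsetI, goal_cases)
  case (1 K \<alpha>)
  then show ?case
    using integrable_g_fun_iff by blast
next
  case (2 f)
  then show ?case
    by (auto elim!: log_1_affine_density_eq_normalized_g_fun)
next
  case (3 f)
  then show ?case
    using normalized_g_fun_mem_F_d by blast
qed

end
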